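(* Let $k\ge4$ and $x\in(1/4,1/2)$. In the one-shot $k$-candidate positioning game with uniform voters on $[0,1]$, left–right tie-breaking, and each candidate's payoff equal to its probability of being the plurality winner, the mixed strategy in which each candidate independently chooses $x$ or $1-x$ with probability $1/2$ each is a symmetric mixed-strategy Nash equilibrium: if all other $k-1$ candidates use this strategy, no (possibly mixed) strategy of the remaining candidate yields a higher win probability.
   Context: Voters form a continuum uniformly distributed on $[0,1]$, each voting for the nearest occupied point. The vote share allocated to an occupied point is the measure of voters whose nearest occupied point it is; it splits into a left part (voters to its left) and a right part (voters to its right). Left–right tie-breaking: if several candidates occupy the same point, one of them chosen uniformly at random receives the entire left part of that point's vote share and a different one chosen uniformly at random receives the entire right part; the others receive nothing. (A single candidate at a point receives both parts.) The plurality winner is the candidate with the largest vote share, ties broken uniformly at random. Each of the $k$ candidates chooses a position in $[0,1]$ (possibly at random). *)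

theory Defs
  imports "HOL-Probability.Probability"
begin

text \<open>Candidates are indexed by 0..k-1; a (pure) profile is p :: nat => real,
  p j being the position of candidate j in [0,1].\<close>

definition occupied :: "nat \<Rightarrow> (nat \<Rightarrow> real) \<Rightarrow> real set" where
  "occupied k p = p ` {..<k}"

text \<open>Left part of the vote share of the occupied point a: voters to the left of a
  whose nearest occupied point is a.\<close>
definition left_part :: "nat \<Rightarrow> (nat \<Rightarrow> real) \<Rightarrow> real \<Rightarrow> real" where
  "left_part k p a =
     (let B = {b \<in> occupied k p. b < a} in if B = {} then a else (a - Max B) / 2)"

definition right_part :: "nat \<Rightarrow> (nat \<Rightarrow> real) \<Rightarrow> real \<Rightarrow> real" where
  "right_part k p a =
     (let B = {b \<in> occupied k p. a < b} in if B = {} then 1 - a else (Min B - a) / 2)"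

text \<open>Left-right tie-breaking: at each occupied point a, a pair (l, r) of candidates at a
  is drawn uniformly: l receives the left part, r the right part; l and r are distinct
  whenever at least two candidates occupy a (and l = r if a single candidate is there).\<close>
definition tb_pairs :: "nat \<Rightarrow> (nat \<Rightarrow> real) \<Rightarrow> real \<Rightarrow> (nat \<times> nat) set" where
  "tb_pairs k p a =
     (let C = {j. j < k \<and> p j = a} in
      if card C = 1 then {(l, r). l \<in> C \<and> r \<in> C}
      else {(l, r). l \<in> C \<and> r \<in> C \<and> l \<noteq> r})"

definition assignments :: "nat \<Rightarrow> (nat \<Rightarrow> real) \<Rightarrow> (real \<Rightarrow> nat \<times> nat) set" where
  "assignments k p = PiE (occupied k p) (tb_pairs k p)"

definition vote_share ::
  "nat \<Rightarrow> (nat \<Rightarrow> real) \<Rightarrow> (real \<Rightarrow> nat \<times> nat) \<Rightarrow> nat \<Rightarrow> real" where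
  "vote_share k p T j =
     (\<Sum>a\<in>occupied k p. (if fst (T a) = j then left_part k p a else 0)
                        + (if snd (T a) = j then right_part k p a else 0))"

definition plurality_winners ::
  "nat \<Rightarrow> (nat \<Rightarrow> real) \<Rightarrow> (real \<Rightarrow> nat \<times> nat) \<Rightarrow> nat set" where
  "plurality_winners k p T =
     {j. j < k \<and> (\<forall>m<k. vote_share k p T m \<le> vote_share k p T j)}"

definition win_prob :: "nat \<Rightarrow> (nat \<Rightarrow> real) \<Rightarrow> nat \<Rightarrow> real" where
  "win_prob k p i =
     (\<Sum>T\<in>assignments k p.
        (if i \<in> plurality_winners k p T then 1 / real (card (plurality_winners k p T)) else 0))
     / real (card (assignments k p))"

text \<open>Expected win probability of candidate i located at y when every other candidate
  independently chooses x or 1-x with probability 1/2 each (uniform over the 2^(k-1)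
  profiles, since x \<noteq> 1-x in the relevant range).\<close>
definition others_profiles :: "nat \<Rightarrow> real \<Rightarrow> nat \<Rightarrow> real \<Rightarrow> (nat \<Rightarrow> real) set" where
  "others_profiles k x i y = PiE {..<k} (\<lambda>j. if j = i then {y} else {x, 1 - x})"

definition dev_payoff :: "nat \<Rightarrow> real \<Rightarrow> nat \<Rightarrow> real \<Rightarrow> real" where
  "dev_payoff k x i y =
     (\<Sum>q\<in>others_profiles k x i y. win_prob k q i) / real (card (others_profiles k x i y))"

end

theory Submission
  imports Defs
begin

text \<open>
  Mirroring the line (\<open>a \<mapsto> 1 - a\<close>) preserves win probabilities, so the payoff of a
  deviation to y equals that of a deviation to 1 - y and it suffices to consider
  y \<in> [0, 1/2]. A deviator at such a y \<noteq> x wins only if all k - 1 others sit at the same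
  point: otherwise it is alone at y with a share below x, while whoever takes the right part
  of 1 - x gets at least x. So it wins with total weight at most 2 over the 2^(k-1) equally
  likely profiles of the others. At y = x it wins with probability 1 when all others are at
  1 - x, with probability 1/4 when exactly one other is at x (then x > 1/4 makes the two
  outer candidates the winners), and with probability 1/k when all are at x; the total
  1 + (k - 1)/4 + 1/k is at least 2 for k \<ge> 4. Hence no y \<in> [0, 1] beats x or 1 - x, and
  integrating this pointwise bound handles mixed deviations.
\<close>

lemma card_off_diagonal:
  fixes C :: "'a set"
  assumes "finite C"
  shows "card {(l, r). l \<in> C \<and> r \<in> C \<and> l \<noteq> r} = card C * (card C - 1)"
proof -
  have "{(l, r). l \<in> C \<and> r \<in> C \<and> l \<noteq> r} = Sigma C (\<lambda>l. C - {l})" by auto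
  then show ?thesis using assms by (simp add: card_SigmaI)
qed

lemma card_PiE_filter_at:
  assumes "finite S" "s \<in> S"
  shows "card {T \<in> PiE S F. P (T s)} = card {p \<in> F s. P p} * (\<Prod>a\<in>S - {s}. card (F a))"
proof -
  have "{T \<in> PiE S F. P (T s)} = PiE S (F(s := {p \<in> F s. P p}))"
    using assms(2) by (auto simp: PiE_iff extensional_def split: if_splits)
  then show ?thesis using assms by (simp add: card_PiE prod.remove)
qed

lemma exists_index_notin:
  assumes "finite F" "card F < k"
  obtains j where "j < k" "j \<notin> F"
proof -
  have "\<not> {..<k} \<subseteq> F"
  proof
    assume "{..<k} \<subseteq> F"
    then have "card {..<k} \<le> card F" by (rule card_mono[OF assms(1)])
    with assms(2) show False by simp
  qed
  then show thesis using that by blast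
qed

section \<open>Vote shares and win probabilities\<close>

lemma finite_occupied: "finite (occupied k q)"
  unfolding occupied_def by simp

lemma tb_pairs_subset: "tb_pairs k q a \<subseteq> {j. j < k \<and> q j = a} \<times> {j. j < k \<and> q j = a}"
  unfolding tb_pairs_def Let_def by auto

lemma finite_tb_pairs: "finite (tb_pairs k q a)"
  by (rule finite_subset[OF tb_pairs_subset]) simp

lemma tb_pairs_single: "{j. j < k \<and> q j = a} = C \<Longrightarrow> card C = 1 \<Longrightarrow> tb_pairs k q a = C \<times> C"
  unfolding tb_pairs_def Let_def by auto

lemma tb_pairs_shared:
  "{j. j < k \<and> q j = a} = C \<Longrightarrow> card C \<noteq> 1 \<Longrightarrow>
    tb_pairs k q a = {(l, r). l \<in> C \<and> r \<in> C \<and> l \<noteq> r}"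
  unfolding tb_pairs_def Let_def by auto

lemma tb_pairs_nonempty:
  assumes "a \<in> occupied k q"
  shows "tb_pairs k q a \<noteq> {}"
proof -
  define C where "C = {j. j < k \<and> q j = a}"
  have "finite C" "C \<noteq> {}" using assms unfolding C_def occupied_def by auto
  then have "card C \<ge> 1" by (simp add: Suc_leI card_gt_0_iff)
  show ?thesis
  proof (cases "card C = 1")
    case True
    with \<open>C \<noteq> {}\<close> show ?thesis using tb_pairs_single[OF C_def[symmetric]] by simp
  next
    case False
    with \<open>card C \<ge> 1\<close> have "card {(l, r). l \<in> C \<and> r \<in> C \<and> l \<noteq> r} \<noteq> 0"
      using \<open>finite C\<close> \<open>C \<noteq> {}\<close> by (simp add: card_off_diagonal)
    then show ?thesis using tb_pairs_shared[OF C_def[symmetric] False] by (metis card.empty)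
  qed
qed

lemma finite_assignments: "finite (assignments k q)"
  unfolding assignments_def by (intro finite_PiE finite_occupied finite_tb_pairs)

lemma card_assignments_pos: "card (assignments k q) > 0"
  using finite_assignments tb_pairs_nonempty
  by (simp add: card_gt_0_iff assignments_def PiE_eq_empty_iff)

lemma finite_plurality_winners: "finite (plurality_winners k q T)"
  unfolding plurality_winners_def by simp

lemma left_part_nonneg:
  assumes "occupied k q \<subseteq> {0..}" "a \<in> occupied k q"
  shows "0 \<le> left_part k q a"
proof -
  define B where "B = {b \<in> occupied k q. b < a}"
  have "finite B" unfolding B_def using finite_occupied by simp
  then have "Max B < a" if "B \<noteq> {}" using Max_in[of B] that unfolding B_def by auto
  then show ?thesis
    using assms unfolding left_part_def Let_def B_def[symmetric] by (cases "B = {}") auto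
qed

lemma right_part_nonneg:
  assumes "occupied k q \<subseteq> {..1}" "a \<in> occupied k q"
  shows "0 \<le> right_part k q a"
proof -
  define B where "B = {b \<in> occupied k q. a < b}"
  have "finite B" unfolding B_def using finite_occupied by simp
  then have "a < Min B" if "B \<noteq> {}" using Min_in[of B] that unfolding B_def by auto
  then show ?thesis
    using assms unfolding right_part_def Let_def B_def[symmetric] by (cases "B = {}") auto
qed

lemma right_part_le_vote_share:
  assumes "occupied k q \<subseteq> {0..1}" "a \<in> occupied k q"
  shows "right_part k q a \<le> vote_share k q T (snd (T a))"
proof -
  let ?share = "\<lambda>b. (if fst (T b) = snd (T a) then left_part k q b else 0)
      + (if snd (T b) = snd (T a) then right_part k q b else 0)"
  have "occupied k q \<subseteq> {0..}" "occupied k q \<subseteq> {..1}" using assms(1) by auto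
  then have parts_nonneg: "0 \<le> left_part k q b" "0 \<le> right_part k q b" if "b \<in> occupied k q" for b
    using left_part_nonneg right_part_nonneg that by blast+
  then have nonneg: "0 \<le> ?share b" if "b \<in> occupied k q" for b
    using that by simp
  have "right_part k q a \<le> ?share a" using parts_nonneg assms(2) by simp
  also have "\<dots> \<le> (\<Sum>b\<in>occupied k q. ?share b)"
    using assms(2) nonneg finite_occupied by (intro member_le_sum) auto
  finally show ?thesis unfolding vote_share_def .
qed

lemma win_prob_nonneg: "win_prob k q i \<ge> 0"
  unfolding win_prob_def by (intro divide_nonneg_nonneg sum_nonneg) auto

lemma win_prob_le_1: "win_prob k q i \<le> 1"
proof -
  have "(if i \<in> plurality_winners k q T then 1 / real (card (plurality_winners k q T)) else 0) \<le> 1" for T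
    using finite_plurality_winners[of k q T] card_gt_0_iff[of "plurality_winners k q T"] by auto
  then have "(\<Sum>T\<in>assignments k q.
      (if i \<in> plurality_winners k q T then 1 / real (card (plurality_winners k q T)) else 0))
      \<le> (\<Sum>T\<in>assignments k q. 1)"
    by (intro sum_mono)
  then show ?thesis unfolding win_prob_def using card_assignments_pos by (simp add: divide_le_eq)
qed

lemma win_prob_eq_0:
  assumes "\<And>T. T \<in> assignments k q \<Longrightarrow> i \<notin> plurality_winners k q T"
  shows "win_prob k q i = 0"
  unfolding win_prob_def using assms by simp

lemma win_prob_count:
  assumes "\<And>T. T \<in> assignments k q \<Longrightarrow> i \<in> plurality_winners k q T \<Longrightarrow>
      card (plurality_winners k q T) = c"
  shows "win_prob k q i =
    real (card {T \<in> assignments k q. i \<in> plurality_winners k q T}) / (real c * real (card (assignments k q)))"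
proof -
  have "(\<Sum>T\<in>assignments k q.
        (if i \<in> plurality_winners k q T then 1 / real (card (plurality_winners k q T)) else 0))
      = (\<Sum>T\<in>assignments k q. (if i \<in> plurality_winners k q T then 1 / real c else 0))"
    using assms by (intro sum.cong) auto
  also have "\<dots> = real (card {T \<in> assignments k q. i \<in> plurality_winners k q T}) / real c"
    using finite_assignments by (simp add: sum.inter_filter[symmetric])
  finally show ?thesis unfolding win_prob_def by simp
qed

lemma win_prob_cong:
  assumes "\<And>j. j < k \<Longrightarrow> q j = q' j"
  shows "win_prob k q i = win_prob k q' i"
proof -
  have occ: "occupied k q = occupied k q'" unfolding occupied_def using assms by auto
  have "\<And>a. {j. j < k \<and> q j = a} = {j. j < k \<and> q' j = a}" using assms by auto
  then have "tb_pairs k q = tb_pairs k q'" unfolding tb_pairs_def by simp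
  moreover have "left_part k q = left_part k q'" "right_part k q = right_part k q'"
    unfolding left_part_def right_part_def occ by simp_all
  ultimately have A: "assignments k q = assignments k q'" and V: "vote_share k q = vote_share k q'"
    unfolding assignments_def vote_share_def by (simp_all only: occ)
  then have "plurality_winners k q = plurality_winners k q'"
    unfolding plurality_winners_def by (simp only:)
  then show ?thesis unfolding win_prob_def A by (simp only:)
qed

lemma win_prob_restrict: "win_prob k (restrict q {..<k}) i = win_prob k q i"
  by (rule win_prob_cong) simp

section \<open>Mirror symmetry\<close>

lemma occupied_reflect: "occupied k (\<lambda>j. 1 - q j) = (\<lambda>a. 1 - a) ` occupied k q"
  unfolding occupied_def by (simp add: image_image)

lemma left_part_reflect: "left_part k (\<lambda>j. 1 - q j) (1 - a) = right_part k q a"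
proof -
  define B where "B = {b \<in> occupied k q. a < b}"
  have "{b \<in> occupied k (\<lambda>j. 1 - q j). b < 1 - a} = (\<lambda>b. 1 - b) ` B"
    unfolding B_def occupied_reflect by auto
  moreover have "B \<noteq> {} \<Longrightarrow> Max ((\<lambda>b. 1 - b) ` B) = 1 - Min B"
    using finite_occupied[of k q] unfolding B_def
    by (intro Max_eqI) (auto intro: rev_image_eqI[OF Min_in])
  ultimately show ?thesis unfolding left_part_def right_part_def Let_def B_def[symmetric] by auto
qed

lemma right_part_reflect: "right_part k (\<lambda>j. 1 - q j) (1 - a) = left_part k q a"
proof -
  define B where "B = {b \<in> occupied k q. b < a}"
  have "{b \<in> occupied k (\<lambda>j. 1 - q j). 1 - a < b} = (\<lambda>b. 1 - b) ` B"
    unfolding B_def occupied_reflect by auto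
  moreover have "B \<noteq> {} \<Longrightarrow> Min ((\<lambda>b. 1 - b) ` B) = 1 - Max B"
    using finite_occupied[of k q] unfolding B_def
    by (intro Min_eqI) (auto intro: rev_image_eqI[OF Max_in])
  ultimately show ?thesis unfolding left_part_def right_part_def Let_def B_def[symmetric] by auto
qed

lemma tb_pairs_reflect: "tb_pairs k (\<lambda>j. 1 - q j) (1 - a) = prod.swap ` tb_pairs k q a"
proof -
  have "{j. j < k \<and> 1 - q j = 1 - a} = {j. j < k \<and> q j = a}" by auto
  then show ?thesis unfolding tb_pairs_def Let_def by (auto simp: image_iff)
qed

definition reflect_assignment ::
  "nat \<Rightarrow> (nat \<Rightarrow> real) \<Rightarrow> (real \<Rightarrow> nat \<times> nat) \<Rightarrow> (real \<Rightarrow> nat \<times> nat)" where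
  "reflect_assignment k q T = restrict (\<lambda>b. prod.swap (T (1 - b))) (occupied k (\<lambda>j. 1 - q j))"

lemma reflect_assignment_in_assignments:
  assumes "T \<in> assignments k q"
  shows "reflect_assignment k q T \<in> assignments k (\<lambda>j. 1 - q j)"
  using assms tb_pairs_reflect[of k q]
  unfolding assignments_def reflect_assignment_def occupied_reflect by (auto simp: PiE_iff)

lemma reflect_assignment_reflect_assignment:
  assumes "T \<in> assignments k q"
  shows "reflect_assignment k (\<lambda>j. 1 - q j) (reflect_assignment k q T) = T"
  using assms unfolding assignments_def reflect_assignment_def occupied_reflect
  by (auto simp: PiE_iff extensional_def fun_eq_iff image_iff)

lemma bij_betw_reflect_assignment:
  "bij_betw (reflect_assignment k q) (assignments k q) (assignments k (\<lambda>j. 1 - q j))"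
proof (rule bij_betw_byWitness[where f' = "reflect_assignment k (\<lambda>j. 1 - q j)"])
  show "\<forall>T\<in>assignments k (\<lambda>j. 1 - q j).
      reflect_assignment k q (reflect_assignment k (\<lambda>j. 1 - q j) T) = T"
    using reflect_assignment_reflect_assignment[of _ k "\<lambda>j. 1 - q j"] by simp
  show "reflect_assignment k (\<lambda>j. 1 - q j) ` assignments k (\<lambda>j. 1 - q j) \<subseteq> assignments k q"
    using reflect_assignment_in_assignments[of _ k "\<lambda>j. 1 - q j"] by auto
qed (auto intro: reflect_assignment_reflect_assignment reflect_assignment_in_assignments)

lemma vote_share_reflect:
  assumes "T \<in> assignments k q"
  shows "vote_share k (\<lambda>j. 1 - q j) (reflect_assignment k q T) j = vote_share k q T j"
proof -
  have "inj_on (\<lambda>a::real. 1 - a) (occupied k q)" by (rule inj_onI) simp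
  then have "vote_share k (\<lambda>j. 1 - q j) (reflect_assignment k q T) j =
    (\<Sum>a\<in>occupied k q. (if snd (T a) = j then left_part k (\<lambda>j. 1 - q j) (1 - a) else 0)
                       + (if fst (T a) = j then right_part k (\<lambda>j. 1 - q j) (1 - a) else 0))"
    unfolding vote_share_def occupied_reflect
    by (simp add: sum.reindex reflect_assignment_def occupied_reflect)
  then show ?thesis
    unfolding left_part_reflect right_part_reflect vote_share_def by (simp add: add.commute)
qed

lemma win_prob_reflect: "win_prob k (\<lambda>j. 1 - q j) i = win_prob k q i"
proof -
  have pw: "plurality_winners k (\<lambda>j. 1 - q j) (reflect_assignment k q T) = plurality_winners k q T"
    if "T \<in> assignments k q" for T
    unfolding plurality_winners_def vote_share_reflect[OF that] ..
  have "(\<Sum>T\<in>assignments k q. (if i \<in> plurality_winners k (\<lambda>j. 1 - q j) (reflect_assignment k q T)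
      then 1 / real (card (plurality_winners k (\<lambda>j. 1 - q j) (reflect_assignment k q T))) else 0))
    = (\<Sum>T\<in>assignments k q.
      (if i \<in> plurality_winners k q T then 1 / real (card (plurality_winners k q T)) else 0))"
    by (rule sum.cong) (simp_all only: pw)
  then show ?thesis
    unfolding win_prob_def
      sum.reindex_bij_betw[OF bij_betw_reflect_assignment, symmetric]
      bij_betw_same_card[OF bij_betw_reflect_assignment, symmetric]
    by simp
qed

definition reflect_profile :: "nat \<Rightarrow> (nat \<Rightarrow> real) \<Rightarrow> nat \<Rightarrow> real" where
  "reflect_profile k q = restrict (\<lambda>j. 1 - q j) {..<k}"

lemma win_prob_reflect_profile: "win_prob k (reflect_profile k q) i = win_prob k q i"
  unfolding reflect_profile_def win_prob_restrict by (rule win_prob_reflect)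

lemma others_profiles_iff:
  "q \<in> others_profiles k x i y \<longleftrightarrow>
     (\<forall>j<k. q j \<in> (if j = i then {y} else {x, 1 - x})) \<and> q \<in> extensional {..<k}"
  by (simp only: others_profiles_def PiE_iff Ball_def lessThan_iff)

lemma reflect_profile_in_others_profiles:
  "q \<in> others_profiles k x i y \<Longrightarrow> reflect_profile k q \<in> others_profiles k x i (1 - y)"
  unfolding others_profiles_iff reflect_profile_def by auto

lemma reflect_profile_reflect_profile:
  "q \<in> others_profiles k x i y \<Longrightarrow> reflect_profile k (reflect_profile k q) = q"
  unfolding others_profiles_iff reflect_profile_def by (auto simp: fun_eq_iff extensional_def)

lemma bij_betw_reflect_profile:
  "bij_betw (reflect_profile k) (others_profiles k x i y) (others_profiles k x i (1 - y))"
  using reflect_profile_in_others_profiles[of _ k x i "1 - y"]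
    reflect_profile_reflect_profile[of _ k x i "1 - y"]
  by (intro bij_betw_byWitness[where f' = "reflect_profile k"])
    (auto intro: reflect_profile_in_others_profiles reflect_profile_reflect_profile)

lemma dev_payoff_reflect: "dev_payoff k x i (1 - y) = dev_payoff k x i y"
  unfolding dev_payoff_def
    sum.reindex_bij_betw[OF bij_betw_reflect_profile, symmetric]
    bij_betw_same_card[OF bij_betw_reflect_profile, symmetric]
  by (simp add: win_prob_reflect_profile)

lemma plurality_winners_eqI:
  assumes "W \<subseteq> {..<k}" "W \<noteq> {}" "\<And>j. j \<in> W \<Longrightarrow> vote_share k q T j = v"
    "\<And>j. j < k \<Longrightarrow> j \<notin> W \<Longrightarrow> vote_share k q T j < v"
  shows "plurality_winners k q T = W"
proof -
  have le: "vote_share k q T m \<le> v" if "m < k" for m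
    using assms(3,4)[of m] that by (cases "m \<in> W") auto
  obtain w where "w \<in> W" using assms(2) by blast
  show ?thesis
  proof (intro set_eqI iffI)
    fix j assume "j \<in> plurality_winners k q T"
    then have "j < k" "vote_share k q T w \<le> vote_share k q T j"
      using \<open>w \<in> W\<close> assms(1) unfolding plurality_winners_def by auto
    then show "j \<in> W" using assms(3)[OF \<open>w \<in> W\<close>] assms(4)[of j] by fastforce
  next
    fix j assume "j \<in> W"
    then show "j \<in> plurality_winners k q T"
      using assms(1,3) le unfolding plurality_winners_def by auto
  qed
qed

lemma vote_share_two_points:
  assumes occ: "occupied k q = {a, 1 - a}" and "a < 1/2"
  shows "vote_share k q T j =
      (if fst (T a) = j then a else 0) + (if snd (T a) = j then 1/2 - a else 0)
    + ((if fst (T (1 - a)) = j then 1/2 - a else 0) + (if snd (T (1 - a)) = j then a else 0))"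
proof -
  have "{b \<in> occupied k q. b < a} = {}" "{b \<in> occupied k q. a < b} = {1 - a}"
    "{b \<in> occupied k q. b < 1 - a} = {a}" "{b \<in> occupied k q. 1 - a < b} = {}"
    using \<open>a < 1/2\<close> unfolding occ by auto
  then have "left_part k q a = a" "right_part k q a = 1/2 - a"
    "left_part k q (1 - a) = 1/2 - a" "right_part k q (1 - a) = a"
    unfolding left_part_def right_part_def Let_def by simp_all
  moreover have "a \<noteq> 1 - a" using \<open>a < 1/2\<close> by simp
  ultimately show ?thesis unfolding vote_share_def occ by simp
qed

lemma win_prob_alone:
  assumes "0 < a" "a < 1/2" "3 \<le> k" "i < k"
  shows "win_prob k ((\<lambda>_. 1 - a)(i := a)) i = 1"
proof -
  let ?q = "(\<lambda>_. 1 - a)(i := a)"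
  define D where "D = {..<k} - {i}"
  have "card D = k - 1" unfolding D_def using assms by simp
  have "a \<noteq> 1 - a" using assms by simp
  obtain j where "j < k" "j \<notin> {i}" using exists_index_notin[of "{i}" k] assms by auto
  then have occ: "occupied k ?q = {a, 1 - a}"
    unfolding occupied_def using assms by (auto simp: image_iff intro: bexI[of _ i] bexI[of _ j])
  have tb: "tb_pairs k ?q a = {i} \<times> {i}"
    by (rule tb_pairs_single) (use assms \<open>a \<noteq> 1 - a\<close> in auto)
  have tb': "tb_pairs k ?q (1 - a) = {(l, r). l \<in> D \<and> r \<in> D \<and> l \<noteq> r}"
    by (rule tb_pairs_shared) (use assms \<open>a \<noteq> 1 - a\<close> \<open>card D = k - 1\<close> in \<open>auto simp: D_def\<close>)
  have pw: "plurality_winners k ?q T = {i}" if "T \<in> assignments k ?q" for T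
  proof -
    have "T a \<in> tb_pairs k ?q a" "T (1 - a) \<in> tb_pairs k ?q (1 - a)"
      using that unfolding assignments_def occ by auto
    then obtain l r where T: "T a = (i, i)" "T (1 - a) = (l, r)" "l \<in> D" "r \<in> D" "l \<noteq> r"
      unfolding tb tb' by auto
    have "vote_share k ?q T j = (if j = i then 1/2 else 0) + (if l = j then 1/2 - a else 0)
        + (if r = j then a else 0)" for j
      using T(3,4) unfolding vote_share_two_points[OF occ assms(2)] T(1,2) D_def by auto
    then show ?thesis
      using assms T(3-5) unfolding D_def by (intro plurality_winners_eqI[where v = "1/2"]) auto
  qed
  then have "{T \<in> assignments k ?q. i \<in> plurality_winners k ?q T} = assignments k ?q" by auto
  then show ?thesis using win_prob_count[of k ?q i 1] pw card_assignments_pos[of k ?q] by simp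
qed

lemma win_prob_unanimous:
  assumes "a < 1/2" "2 \<le> k" "i < k"
  shows "win_prob k (\<lambda>_. a) i = 1 / real k"
proof -
  let ?q = "\<lambda>_::nat. a"
  define P where "P = {(l, r). l \<in> {..<k} \<and> r \<in> {..<k} \<and> l \<noteq> r}"
  have occ: "occupied k ?q = {a}" unfolding occupied_def using assms by auto
  have tb: "tb_pairs k ?q a = P"
    unfolding P_def by (rule tb_pairs_shared) (use assms in auto)
  have "left_part k ?q a = a" "right_part k ?q a = 1 - a"
    unfolding left_part_def right_part_def Let_def occ by simp_all
  then have vote: "vote_share k ?q T j = (if fst (T a) = j then a else 0) + (if snd (T a) = j then 1 - a else 0)"
    for T j unfolding vote_share_def occ by simp
  have A: "assignments k ?q = PiE {a} (tb_pairs k ?q)" unfolding assignments_def occ ..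
  have pw: "plurality_winners k ?q T = {snd (T a)}" if "T \<in> assignments k ?q" for T
  proof -
    have "T a \<in> P" using that unfolding A tb[symmetric] by auto
    then obtain l r where "T a = (l, r)" "l < k" "r < k" "l \<noteq> r"
      unfolding P_def by auto
    then show ?thesis
      using assms by (intro plurality_winners_eqI[where v = "1 - a"]) (auto simp: vote)
  qed
  have winning: "{T \<in> assignments k ?q. i \<in> plurality_winners k ?q T} =
      {T \<in> PiE {a} (tb_pairs k ?q). snd (T a) = i}"
    using pw unfolding A by auto
  have "{p \<in> P. snd p = i} = ({..<k} - {i}) \<times> {i}"
    unfolding P_def using assms by auto
  then have card_winning: "card {T \<in> PiE {a} (tb_pairs k ?q). snd (T a) = i} = k - 1"
    using card_PiE_filter_at[of "{a}" a "tb_pairs k ?q" "\<lambda>p. snd p = i"] assms unfolding tb by simp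
  have "card P = k * (k - 1)"
    unfolding P_def using card_off_diagonal[of "{..<k}"] by simp
  then have "card (assignments k ?q) = k * (k - 1)" by (simp add: A card_PiE tb)
  then show ?thesis
    using win_prob_count[of k ?q i 1] pw winning card_winning assms by (simp add: of_nat_diff)
qed

lemma win_prob_pair:
  assumes "1/4 < a" "a < 1/2" "4 \<le> k" "i < k" "j < k" "j \<noteq> i"
  shows "win_prob k ((\<lambda>_. 1 - a)(i := a, j := a)) i = 1/4"
proof -
  let ?q = "(\<lambda>_. 1 - a)(i := a, j := a)"
  define D where "D = {..<k} - {i, j}"
  define N where "N = card (tb_pairs k ?q (1 - a))"
  have "card D = k - 2" unfolding D_def using assms by (simp add: card_Diff_subset)
  have "a \<noteq> 1 - a" using assms by simp
  obtain m where "m < k" "m \<notin> {i, j}" using exists_index_notin[of "{i, j}" k] assms by auto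
  then have occ: "occupied k ?q = {a, 1 - a}"
    unfolding occupied_def using assms by (auto simp: image_iff intro: bexI[of _ i] bexI[of _ m])
  have "tb_pairs k ?q a = {(l, r). l \<in> {i, j} \<and> r \<in> {i, j} \<and> l \<noteq> r}"
    by (rule tb_pairs_shared) (use assms \<open>a \<noteq> 1 - a\<close> in auto)
  then have tb: "tb_pairs k ?q a = {(i, j), (j, i)}" using assms by auto
  have tb': "tb_pairs k ?q (1 - a) = {(l, r). l \<in> D \<and> r \<in> D \<and> l \<noteq> r}"
    by (rule tb_pairs_shared) (use assms \<open>a \<noteq> 1 - a\<close> \<open>card D = k - 2\<close> in \<open>auto simp: D_def\<close>)
  have A: "assignments k ?q = PiE {a, 1 - a} (tb_pairs k ?q)" unfolding assignments_def occ ..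
  have pw: "plurality_winners k ?q T = {fst (T a), snd (T (1 - a))}"
    and sides: "fst (T a) \<in> {i, j}" "snd (T (1 - a)) \<notin> {i, j}" if "T \<in> assignments k ?q" for T
  proof -
    obtain l r l' r' where T: "T a = (l, r)" "T (1 - a) = (l', r')" by (metis surj_pair)
    have "T a \<in> tb_pairs k ?q a" "T (1 - a) \<in> tb_pairs k ?q (1 - a)"
      using that unfolding A by auto
    then have lr: "l \<in> {i, j}" "r \<in> {i, j}" "l \<noteq> r"
      and l'r': "l' \<notin> {i, j}" "r' \<notin> {i, j}" "r' < k" "l' \<noteq> r'"
      using assms(6) unfolding tb tb' T D_def by auto
    have "vote_share k ?q T m = (if l = m then a else 0) + (if r = m then 1/2 - a else 0)
        + ((if l' = m then 1/2 - a else 0) + (if r' = m then a else 0))" for m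
      unfolding vote_share_two_points[OF occ assms(2)] T by simp
    moreover have "l \<noteq> r'" "r \<noteq> l'" "r \<noteq> r'" "l \<noteq> l'" using lr l'r' by auto
    ultimately show "plurality_winners k ?q T = {fst (T a), snd (T (1 - a))}"
      using assms lr l'r' unfolding T by (intro plurality_winners_eqI[where v = a]) auto
    show "fst (T a) \<in> {i, j}" "snd (T (1 - a)) \<notin> {i, j}" using lr l'r' unfolding T by simp_all
  qed
  have "card (plurality_winners k ?q T) = 2" if "T \<in> assignments k ?q" for T
    using pw[OF that] sides[OF that] by auto
  moreover have "i \<in> plurality_winners k ?q T \<longleftrightarrow> fst (T a) = i" if "T \<in> assignments k ?q" for T
    using pw[OF that] sides[OF that] by auto
  then have winning: "{T \<in> assignments k ?q. i \<in> plurality_winners k ?q T} = {T \<in> assignments k ?q. fst (T a) = i}"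
    by auto
  have "{p \<in> tb_pairs k ?q a. fst p = i} = {(i, j)}" unfolding tb using assms by auto
  then have "card {T \<in> assignments k ?q. fst (T a) = i} = N"
    using card_PiE_filter_at[of "{a, 1 - a}" a "tb_pairs k ?q" "\<lambda>p. fst p = i"] \<open>a \<noteq> 1 - a\<close>
    unfolding A N_def by simp
  moreover have "card (assignments k ?q) = 2 * N"
    using \<open>a \<noteq> 1 - a\<close> assms unfolding A N_def by (simp add: card_PiE tb)
  moreover have "N > 0"
    using finite_tb_pairs tb_pairs_nonempty[of "1 - a" k ?q] occ unfolding N_def by auto
  ultimately show ?thesis using win_prob_count[of k ?q i 2] winning by simp
qed

lemma win_prob_squeezed:
  assumes "1/4 < a" "a < 1/2" "0 \<le> y" "y \<le> 1/2" "y \<noteq> a" "i < k" "q i = y"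
    and others: "\<forall>j<k. j \<noteq> i \<longrightarrow> q j = a \<or> q j = 1 - a"
    and "j\<^sub>1 < k" "j\<^sub>1 \<noteq> i" "q j\<^sub>1 = a" and "j\<^sub>2 < k" "q j\<^sub>2 = 1 - a"
  shows "win_prob k q i = 0"
proof (rule win_prob_eq_0)
  fix T assume T: "T \<in> assignments k q"
  have "a \<noteq> 1 - a" "y \<noteq> 1 - a" using assms by auto
  have "{a, 1 - a, y} = q ` {j\<^sub>1, j\<^sub>2, i}" using assms by simp
  also have "\<dots> \<subseteq> occupied k q" unfolding occupied_def using assms by (intro image_mono) auto
  finally have occ: "occupied k q = {a, 1 - a, y}"
    using assms unfolding occupied_def by auto
  have "tb_pairs k q y = {i} \<times> {i}"
    by (rule tb_pairs_single) (use assms others \<open>y \<noteq> 1 - a\<close> in auto)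
  then have "T y = (i, i)" using T unfolding assignments_def occ by auto
  moreover have "fst (T b) \<noteq> i \<and> snd (T b) \<noteq> i" if "b \<in> {a, 1 - a}" for b
    using T tb_pairs_subset[of k q b] that assms \<open>y \<noteq> 1 - a\<close>
    unfolding assignments_def occ by (auto simp: PiE_iff)
  ultimately have "vote_share k q T i = left_part k q y + right_part k q y"
    unfolding vote_share_def occ using \<open>a \<noteq> 1 - a\<close> \<open>y \<noteq> a\<close> \<open>y \<noteq> 1 - a\<close> by simp
  also have "\<dots> < a"
  proof (cases "y < a")
    case True
    then have "{b \<in> occupied k q. b < y} = {}" "{b \<in> occupied k q. y < b} = {a, 1 - a}"
      using assms unfolding occ by auto
    then show ?thesis
      unfolding left_part_def right_part_def Let_def using True assms by (simp add: field_simps)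
  next
    case False
    then have "{b \<in> occupied k q. b < y} = {a}" "{b \<in> occupied k q. y < b} = {1 - a}"
      using assms unfolding occ by auto
    then show ?thesis
      unfolding left_part_def right_part_def Let_def using assms by (simp add: field_simps)
  qed
  also have "a = right_part k q (1 - a)"
  proof -
    have "{b \<in> occupied k q. 1 - a < b} = {}" using assms unfolding occ by auto
    then show ?thesis unfolding right_part_def Let_def by simp
  qed
  also have "\<dots> \<le> vote_share k q T (snd (T (1 - a)))"
    by (rule right_part_le_vote_share) (use assms in \<open>auto simp: occ\<close>)
  finally have "vote_share k q T i < vote_share k q T (snd (T (1 - a)))" .
  moreover have "snd (T (1 - a)) < k"
    using T tb_pairs_subset[of k q "1 - a"] unfolding assignments_def occ by (auto simp: PiE_iff)
  ultimately show "i \<notin> plurality_winners k q T" unfolding plurality_winners_def by force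
qed

lemma finite_others_profiles: "finite (others_profiles k x i y)"
  unfolding others_profiles_def by (intro finite_PiE) auto

lemma card_others_profiles_eq: "card (others_profiles k x i y) = card (others_profiles k x i z)"
  unfolding others_profiles_def by (simp add: card_PiE if_distrib cong: if_cong)

lemma others_profile_eq_restrict:
  assumes "q \<in> others_profiles k x i y" "\<And>j. j < k \<Longrightarrow> j \<noteq> i \<Longrightarrow> q j = z"
  shows "q = restrict ((\<lambda>_. z)(i := y)) {..<k}"
  using assms unfolding others_profiles_iff by (auto simp: fun_eq_iff extensional_def)

lemma sum_win_prob_others_profiles_le_2:
  assumes "1/4 < x" "x < 1/2" "0 \<le> y" "y \<le> 1/2" "y \<noteq> x" "i < k"
  shows "(\<Sum>q\<in>others_profiles k x i y. win_prob k q i) \<le> 2"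
proof -
  let ?Q = "others_profiles k x i y"
  let ?U = "{restrict ((\<lambda>_. x)(i := y)) {..<k}, restrict ((\<lambda>_. 1 - x)(i := y)) {..<k}}"
  have "win_prob k q i = 0" if q: "q \<in> ?Q - ?U" for q
  proof -
    have qi: "q i = y" and others: "\<forall>j<k. j \<noteq> i \<longrightarrow> q j = x \<or> q j = 1 - x"
      using q assms(6) by (auto simp: others_profiles_iff)
    obtain j\<^sub>1 where "j\<^sub>1 < k" "j\<^sub>1 \<noteq> i" "q j\<^sub>1 = x"
      using q others others_profile_eq_restrict[of q k x i y "1 - x"] by blast
    moreover obtain j\<^sub>2 where "j\<^sub>2 < k" "q j\<^sub>2 = 1 - x"
      using q others others_profile_eq_restrict[of q k x i y x] by blast
    ultimately show ?thesis using win_prob_squeezed[OF assms qi others] by blast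
  qed
  then have "(\<Sum>q\<in>?Q. win_prob k q i) = (\<Sum>q\<in>?Q \<inter> ?U. win_prob k q i)"
    using finite_others_profiles by (intro sum.mono_neutral_right) auto
  also have "\<dots> \<le> (\<Sum>q\<in>?Q \<inter> ?U. 1)" by (intro sum_mono win_prob_le_1)
  also have "\<dots> \<le> card ?U" by (simp add: card_mono)
  also have "\<dots> \<le> 2" by (simp add: card_insert_le_m1)
  finally show ?thesis .
qed

lemma sum_win_prob_others_profiles_ge_2:
  assumes "1/4 < x" "x < 1/2" "4 \<le> k" "i < k"
  shows "2 \<le> (\<Sum>q\<in>others_profiles k x i x. win_prob k q i)"
proof -
  define g where "g j = restrict ((\<lambda>_. 1 - x)(i := x, j := x)) {..<k}" for j
  define u where "u = restrict (\<lambda>_. x) {..<k}"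
  have "x \<noteq> 1 - x" using assms by simp
  have "inj_on g {..<k}"
  proof (rule inj_onI)
    fix a b assume "a \<in> {..<k}" "b \<in> {..<k}" "g a = g b"
    then have "g a a = g b a" "g a b = g b b" by simp_all
    then show "a = b"
      using \<open>a \<in> {..<k}\<close> \<open>b \<in> {..<k}\<close> \<open>x \<noteq> 1 - x\<close> by (auto simp: g_def split: if_splits)
  qed
  have "u \<notin> g ` {..<k}"
  proof
    assume "u \<in> g ` {..<k}"
    then obtain j where "u = g j" by blast
    have "card {i, j} < k" using assms by (simp add: card_insert_if)
    then obtain m where "m < k" "m \<notin> {i, j}" by (meson exists_index_notin finite.emptyI finite.insertI)
    then show False using fun_cong[OF \<open>u = g j\<close>, of m] \<open>x \<noteq> 1 - x\<close> unfolding u_def g_def by simp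
  qed
  have "win_prob k (g i) i = 1"
    using win_prob_alone[of x k i] assms by (simp add: g_def win_prob_restrict)
  moreover have "(\<Sum>j\<in>{..<k} - {i}. win_prob k (g j) i) = (\<Sum>j\<in>{..<k} - {i}. 1/4)"
    using win_prob_pair[of x k i] assms by (intro sum.cong) (simp_all add: g_def win_prob_restrict)
  ultimately have "(\<Sum>j<k. win_prob k (g j) i) = 1 + real (k - 1) / 4"
    using assms by (simp add: sum.remove)
  moreover have "win_prob k u i = 1 / real k"
    using win_prob_unanimous[of x k i] assms by (simp add: u_def win_prob_restrict)
  ultimately have "(\<Sum>q\<in>insert u (g ` {..<k}). win_prob k q i)
      = 1 / real k + (1 + real (k - 1) / 4)"
    using \<open>u \<notin> g ` {..<k}\<close> \<open>inj_on g {..<k}\<close> by (simp add: sum.reindex)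
  also have "\<dots> \<ge> 2"
  proof (cases "k = 4")
    case False
    then have "real (k - 1) \<ge> 4" using assms by linarith
    moreover have "0 \<le> 1 / real k" by simp
    ultimately show ?thesis by linarith
  qed simp
  also have "insert u (g ` {..<k}) \<subseteq> others_profiles k x i x"
    by (auto simp: others_profiles_iff u_def g_def)
  then have "(\<Sum>q\<in>insert u (g ` {..<k}). win_prob k q i)
      \<le> (\<Sum>q\<in>others_profiles k x i x. win_prob k q i)"
    using finite_others_profiles win_prob_nonneg by (intro sum_mono2) auto
  finally show ?thesis .
qed

lemma dev_payoff_nonneg: "0 \<le> dev_payoff k x i y"
  unfolding dev_payoff_def by (intro divide_nonneg_nonneg sum_nonneg win_prob_nonneg) simp

lemma dev_payoff_le_equilibrium:
  assumes "1/4 < x" "x < 1/2" "4 \<le> k" "i < k" "y \<in> {0..1}"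
  shows "dev_payoff k x i y \<le> dev_payoff k x i x"
proof -
  define y' where "y' = min y (1 - y)"
  have "dev_payoff k x i y = dev_payoff k x i y'"
    unfolding y'_def min_def using dev_payoff_reflect[of k x i y] by simp
  moreover have "dev_payoff k x i y' \<le> dev_payoff k x i x"
  proof (cases "y' = x")
    case False
    have "0 \<le> y'" "y' \<le> 1/2" using assms(5) unfolding y'_def min_def by auto
    then have "(\<Sum>q\<in>others_profiles k x i y'. win_prob k q i)
        \<le> (\<Sum>q\<in>others_profiles k x i x. win_prob k q i)"
      using sum_win_prob_others_profiles_le_2[of x y' i k] sum_win_prob_others_profiles_ge_2[of x k i]
        assms False by linarith
    then show ?thesis
      unfolding dev_payoff_def card_others_profiles_eq[of k x i y' x] by (simp add: divide_right_mono)
  qed simp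
  ultimately show ?thesis by simp
qed

theorem mainTheorem19:
  fixes k i :: nat and x :: real and M :: "real measure"
  assumes "k \<ge> 4" and "1/4 < x" and "x < 1/2" and "i < k"
    and "prob_space M" and "sets M = sets borel" and "emeasure M {0..1} = 1"
  shows "(\<forall>y\<in>{0..1}. dev_payoff k x i y \<le> (dev_payoff k x i x + dev_payoff k x i (1 - x)) / 2)
       \<and> (\<integral>y. dev_payoff k x i y \<partial>M) \<le> (dev_payoff k x i x + dev_payoff k x i (1 - x)) / 2"
proof -
  interpret prob_space M by fact
  have rhs: "(dev_payoff k x i x + dev_payoff k x i (1 - x)) / 2 = dev_payoff k x i x"
    using dev_payoff_reflect[of k x i x] by simp
  have bound: "\<forall>y\<in>{0..1}. dev_payoff k x i y \<le> dev_payoff k x i x"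
    using dev_payoff_le_equilibrium assms(1-4) by blast
  have "AE y in M. y \<in> {0..1}"
    using assms(7) by (intro AE_prob_1) (simp add: emeasure_eq_measure)
  then have "(\<integral>y. dev_payoff k x i y \<partial>M) \<le> (\<integral>y. dev_payoff k x i x \<partial>M)"
    using bound dev_payoff_nonneg by (intro integral_mono_AE') auto
  then show ?thesis unfolding rhs using bound by (simp add: prob_space)
qed

end
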